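(* Let $$A = \begin{pmatrix} a_1 & b_1\\ c_1 & d_1\end{pmatrix},\qquad B = \begin{pmatrix} a_2 & b_2\\ c_2 & d_2\end{pmatrix}$$ be elements of $\mathrm{SL}_2(\mathbb{N}_0)$. Then $(A,B)$ is a left-right pair if and only if $a_1 d_2 \le b_2 c_1$ or $a_2 d_1 \le c_2 b_1$.
   Context: $\mathbb{N}_0=\{0,1,2,\dots\}$ and $\mathrm{SL}_2(\mathbb{N}_0)$ is the set of $2\times 2$ matrices $\begin{pmatrix} a & b\\ c & d\end{pmatrix}$ with $a,b,c,d\in\mathbb{N}_0$ and $ad-bc=1$. Such a matrix $T$ acts on the Riemann sphere $\overline{\mathbb{C}}=\mathbb{C}\cup\{\infty\}$ by the Möbius transformation $T(z)=\frac{az+b}{cz+d}$. Let $\mathcal{D}_0=\{x+iy : x>0,\ y>0\}$ (the open first quadrant). A pair $(L,R)$ of elements of $\mathrm{SL}_2(\mathbb{N}_0)$ is called a left-right pair if $L(\mathcal{D}_0)\cap R(\mathcal{D}_0)=\emptyset$. *)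

theory Defs
  imports Complex_Main
begin

text \<open>A 2x2 matrix (a b; c d) with entries in N0 is represented as the tuple (a, b, c, d).\<close>
type_synonym mat2 = "nat \<times> nat \<times> nat \<times> nat"

definition SL2N0 :: "mat2 set" where
  "SL2N0 = {(a, b, c, d). int a * int d - int b * int c = 1}"

text \<open>Moebius action on the complex numbers (points of the sphere other than infinity
  suffice, since the domain below is the open first quadrant).\<close>
definition moebius :: "mat2 \<Rightarrow> complex \<Rightarrow> complex" where
  "moebius T z = (case T of (a, b, c, d) \<Rightarrow>
     (of_nat a * z + of_nat b) / (of_nat c * z + of_nat d))"

definition D0 :: "complex set" where
  "D0 = {z. Re z > 0 \<and> Im z > 0}"

definition left_right_pair :: "mat2 \<Rightarrow> mat2 \<Rightarrow> bool" where
  "left_right_pair L R \<longleftrightarrow> moebius L ` D0 \<inter> moebius R ` D0 = {}"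

end

theory Submission imports Defs begin

text \<open>For \<open>T = (a, b, c, d)\<close> in \<open>SL\<^sub>2(\<nat>\<^sub>0)\<close> the identities
  \<open>a - c T(z) = 1 / (c z + d)\<close> and \<open>d T(z) - b = z / (c z + d)\<close> show that every point of
  \<open>T(D\<^sub>0)\<close> has real part in the open interval \<open>(b/d, a/c)\<close>; inverting \<open>T\<close> shows conversely
  that \<open>T(D\<^sub>0)\<close> contains every point \<open>x + iy\<close> with \<open>x\<close> in that interval and \<open>y > 0\<close> small enough.
  Hence \<open>T\<^sub>1(D\<^sub>0)\<close> and \<open>T\<^sub>2(D\<^sub>0)\<close> are disjoint exactly when the two intervals are, i.e. when
  \<open>a\<^sub>1/c\<^sub>1 \<le> b\<^sub>2/d\<^sub>2\<close> or \<open>a\<^sub>2/c\<^sub>2 \<le> b\<^sub>1/d\<^sub>1\<close>.\<close>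

lemma SL2N0_det:
  assumes "(a, b, c, d) \<in> SL2N0"
  shows "of_nat a * of_nat d - of_nat b * of_nat c = (1 :: 'a :: comm_ring_1)"
proof -
  have "(of_int (int a * int d - int b * int c) :: 'a) = 1"
    using assms by (simp add: SL2N0_def)
  then show ?thesis by simp
qed

lemma SL2N0_d_pos:
  assumes "(a, b, c, d) \<in> SL2N0"
  shows "d > 0"
proof (rule ccontr)
  assume "\<not> d > 0"
  with assms have "int b * int c = - 1" by (simp add: SL2N0_def)
  moreover have "int b * int c \<ge> 0" by simp
  ultimately show False by linarith
qed

lemma moebius_D0_Re_bounds:
  assumes T: "(a, b, c, d) \<in> SL2N0" and z: "z \<in> D0"
  defines "w \<equiv> moebius (a, b, c, d) z"
  shows "real c * Re w < real a" and "real b < real d * Re w"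
proof -
  define q where "q = of_nat c * z + of_nat d"
  have zpos: "Re z > 0" "Im z > 0" using z by (auto simp: D0_def)
  have "Re q > 0"
    unfolding q_def using zpos SL2N0_d_pos[OF T] by (simp add: add_nonneg_pos)
  then have "q \<noteq> 0" by auto
  have w: "w = (of_nat a * z + of_nat b) / q" by (simp add: w_def moebius_def q_def)
  have left: "of_nat a - of_nat c * w = 1 / q"
    using \<open>q \<noteq> 0\<close> SL2N0_det[OF T, where 'a = complex] unfolding w
    by (simp add: field_simps q_def)
  have "Re (1 / q) > 0"
    using \<open>Re q > 0\<close> by (simp add: Re_divide add_pos_nonneg)
  then show "real c * Re w < real a"
    using arg_cong[of _ _ Re, OF left] by simp
  have right: "of_nat d * w - of_nat b = z / q"
    using \<open>q \<noteq> 0\<close> SL2N0_det[OF T, where 'a = complex] unfolding w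
    by (simp add: field_simps q_def)
  have "Re (z / q) > 0"
  proof -
    have "Re z * Re q + Im z * Im q = real c * (Re z ^ 2 + Im z ^ 2) + real d * Re z"
      by (simp add: q_def power2_eq_square algebra_simps)
    then have "Re z * Re q + Im z * Im q > 0"
      using zpos SL2N0_d_pos[OF T] by (simp add: add_nonneg_pos)
    then show ?thesis
      unfolding Re_divide' using \<open>q \<noteq> 0\<close> by simp
  qed
  then show "real b < real d * Re w"
    using arg_cong[of _ _ Re, OF right] by simp
qed

text \<open>The point \<open>x + iy\<close> is the image of \<open>z = (d w - b) / (a - c w)\<close>; the quadratic
  hypothesis is exactly \<open>Re z > 0\<close> and the determinant makes \<open>Im z\<close> a positive multiple of \<open>y\<close>.\<close>

lemma moebius_image_D0I:
  assumes T: "(a, b, c, d) \<in> SL2N0" and "y > 0" and "real c * x < real a"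
    and quadratic: "real c * real d * y\<^sup>2 < (real a - real c * x) * (real d * x - real b)"
  shows "Complex x y \<in> moebius (a, b, c, d) ` D0"
proof -
  define w where "w = Complex x y"
  define p where "p = of_nat a - of_nat c * w"
  define N where "N = of_nat d * w - (of_nat b :: complex)"
  define z where "z = N / p"
  have "Re p > 0" using \<open>real c * x < real a\<close> by (simp add: p_def w_def)
  then have "p \<noteq> 0" by auto
  have "of_nat c * z + of_nat d = 1 / p"
    using \<open>p \<noteq> 0\<close> SL2N0_det[OF T, where 'a = complex]
    by (simp add: z_def N_def p_def field_simps)
  moreover have "of_nat a * z + of_nat b = w / p"
    using \<open>p \<noteq> 0\<close> SL2N0_det[OF T, where 'a = complex]
    by (simp add: z_def N_def p_def field_simps)
  ultimately have "moebius (a, b, c, d) z = w"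
    using \<open>p \<noteq> 0\<close> by (simp add: moebius_def)
  have "Re N * Re p + Im N * Im p
      = (real a - real c * x) * (real d * x - real b) - real c * real d * y\<^sup>2"
    by (simp add: N_def w_def p_def power2_eq_square algebra_simps)
  then have "Re z > 0"
    using quadratic \<open>p \<noteq> 0\<close> unfolding z_def Re_divide' by simp
  have "Im N * Re p - Re N * Im p = (real a * real d - real b * real c) * y"
    by (simp add: N_def w_def p_def algebra_simps)
  then have "Im z > 0"
    using \<open>y > 0\<close> \<open>p \<noteq> 0\<close> SL2N0_det[OF T, where 'a = real]
    unfolding z_def Im_divide' by simp
  with \<open>Re z > 0\<close> have "z \<in> D0" by (simp add: D0_def)
  with \<open>moebius (a, b, c, d) z = w\<close> show ?thesis
    unfolding w_def by (metis image_eqI)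
qed

lemma moebius_images_D0_disjoint:
  assumes T1: "(a1, b1, c1, d1) \<in> SL2N0" and T2: "(a2, b2, c2, d2) \<in> SL2N0"
    and "a1 * d2 \<le> b2 * c1"
  shows "moebius (a1, b1, c1, d1) ` D0 \<inter> moebius (a2, b2, c2, d2) ` D0 = {}"
proof (rule ccontr)
  assume "\<not> ?thesis"
  then obtain z1 z2 where z: "z1 \<in> D0" "z2 \<in> D0"
    and eq: "moebius (a1, b1, c1, d1) z1 = moebius (a2, b2, c2, d2) z2"
    by blast
  define X where "X = Re (moebius (a2, b2, c2, d2) z2)"
  have "real c1 * X < real a1"
    using moebius_D0_Re_bounds(1)[OF T1 z(1)] eq X_def by simp
  then have "real d2 * (real c1 * X) < real d2 * real a1"
    using SL2N0_d_pos[OF T2] by simp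
  moreover have "real c1 * real b2 \<le> real c1 * (real d2 * X)"
    using moebius_D0_Re_bounds(2)[OF T2 z(2)] X_def by (simp add: mult_left_mono)
  moreover have "real a1 * real d2 \<le> real b2 * real c1"
    using \<open>a1 * d2 \<le> b2 * c1\<close> by (metis of_nat_le_iff of_nat_mult)
  ultimately show False by (simp add: algebra_simps)
qed

lemma intervals_common_point:
  fixes a1 b1 c1 d1 a2 b2 c2 d2 :: real
  assumes "d1 > 0" "d2 > 0"
    and "c1 * b1 < a1 * d1" "c1 * b2 < a1 * d2" "c2 * b1 < a2 * d1" "c2 * b2 < a2 * d2"
  shows "\<exists>x. b1 < d1 * x \<and> c1 * x < a1 \<and> b2 < d2 * x \<and> c2 * x < a2"
proof -
  define L where "L = max (b1 / d1) (b2 / d2)"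
  have "c1 * L < a1" "c2 * L < a2"
    using assms by (auto simp: L_def max_def field_simps)
  then have "\<forall>\<^sub>F x in at_right L. c1 * x < a1 \<and> c2 * x < a2"
    by (intro eventually_conj order_tendstoD(2)) (auto intro!: tendsto_eq_intros)
  moreover have "\<forall>\<^sub>F x in at_right L. L < x"
    by (rule eventually_at_right_less)
  moreover have "b1 < d1 * x \<and> b2 < d2 * x" if "L < x" for x
    using that assms(1,2) by (auto simp: L_def field_simps)
  ultimately have "\<forall>\<^sub>F x in at_right L. b1 < d1 * x \<and> c1 * x < a1 \<and> b2 < d2 * x \<and> c2 * x < a2"
    by (auto elim: eventually_elim2)
  then show ?thesis
    using eventually_happens' trivial_limit_at_right_real by blast
qed

lemma moebius_images_D0_overlap:
  assumes T1: "(a1, b1, c1, d1) \<in> SL2N0" and T2: "(a2, b2, c2, d2) \<in> SL2N0"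
    and "b2 * c1 < a1 * d2" and "c2 * b1 < a2 * d1"
  shows "moebius (a1, b1, c1, d1) ` D0 \<inter> moebius (a2, b2, c2, d2) ` D0 \<noteq> {}"
proof -
  have "real c1 * real b2 < real a1 * real d2" "real c2 * real b1 < real a2 * real d1"
    using assms(3,4) by (metis mult.commute of_nat_less_iff of_nat_mult)+
  moreover have "real c1 * real b1 < real a1 * real d1" "real c2 * real b2 < real a2 * real d2"
    using SL2N0_det[OF T1, where 'a = real] SL2N0_det[OF T2, where 'a = real] by argo+
  ultimately obtain x where x: "real b1 < real d1 * x" "real c1 * x < real a1"
      "real b2 < real d2 * x" "real c2 * x < real a2"
    using intervals_common_point[of "real d1" "real d2" "real c1" "real b1" "real a1"
        "real b2" "real c2" "real a2"] SL2N0_d_pos[OF T1] SL2N0_d_pos[OF T2]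
    by auto
  define e1 where "e1 = (real a1 - real c1 * x) * (real d1 * x - real b1)"
  define e2 where "e2 = (real a2 - real c2 * x) * (real d2 * x - real b2)"
  have "e1 > 0" "e2 > 0" using x by (simp_all add: e1_def e2_def)
  then have "\<forall>\<^sub>F y in at_right 0.
      real c1 * real d1 * y\<^sup>2 < e1 \<and> real c2 * real d2 * y\<^sup>2 < e2"
    by (intro eventually_conj order_tendstoD(2)) (auto intro!: tendsto_eq_intros)
  then obtain y where y: "y > 0" "real c1 * real d1 * y\<^sup>2 < e1" "real c2 * real d2 * y\<^sup>2 < e2"
    using eventually_happens'[OF trivial_limit_at_right_real]
      eventually_conj[OF eventually_at_right_less] by blast
  have "Complex x y \<in> moebius (a1, b1, c1, d1) ` D0"
    using moebius_image_D0I[OF T1 \<open>y > 0\<close> x(2)] y(2) by (simp add: e1_def)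
  moreover have "Complex x y \<in> moebius (a2, b2, c2, d2) ` D0"
    using moebius_image_D0I[OF T2 \<open>y > 0\<close> x(4)] y(3) by (simp add: e2_def)
  ultimately show ?thesis by blast
qed

theorem theorem1p1:
  fixes a1 b1 c1 d1 a2 b2 c2 d2 :: nat
  assumes "(a1, b1, c1, d1) \<in> SL2N0" and "(a2, b2, c2, d2) \<in> SL2N0"
  shows "left_right_pair (a1, b1, c1, d1) (a2, b2, c2, d2) \<longleftrightarrow>
         (a1 * d2 \<le> b2 * c1 \<or> a2 * d1 \<le> c2 * b1)"
proof
  assume "left_right_pair (a1, b1, c1, d1) (a2, b2, c2, d2)"
  then show "a1 * d2 \<le> b2 * c1 \<or> a2 * d1 \<le> c2 * b1"
    using moebius_images_D0_overlap[OF assms] by (force simp: left_right_pair_def)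
next
  assume "a1 * d2 \<le> b2 * c1 \<or> a2 * d1 \<le> c2 * b1"
  then show "left_right_pair (a1, b1, c1, d1) (a2, b2, c2, d2)"
    using moebius_images_D0_disjoint[OF assms] moebius_images_D0_disjoint[OF assms(2,1)]
    by (auto simp: left_right_pair_def mult.commute)
qed

end
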